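(* Let $k\ge1$ and let $\Gamma\subset\mathbb{R}_+^k$ be a nonempty compact set. Let $\mu_n=(q_n,s_n,b_n)$, $n=1,2,\dots$, and $\mu=(q,s,b)$ be mechanisms in $\mathcal{M}_\Gamma$. Suppose that $b_n$ converges pointwise to $b$ on $\mathbb{R}^k$ and that $\mu$ is seller favorable. Then $\limsup_{n\to\infty}s_n(x)\le s(x)$ for every $x\in\mathbb{R}_+^k$, and consequently $\limsup_{n\to\infty}R(\mu_n;X)\le R(\mu;X)$ for every random valuation $X$ with values in $\mathbb{R}_+^k$ and finite expectation ($\mathbb{E}\|X\|<\infty$).
   Context: A $\Gamma$-mechanism consists of $q:\mathbb{R}_+^k\to\Gamma$ and $s:\mathbb{R}_+^k\to\mathbb{R}$; it is IC if $q(x)\cdot x-s(x)\ge q(y)\cdot x-s(y)$ for all $x,y\in\mathbb{R}_+^k$, IR if $q(x)\cdot x-s(x)\ge0$ for all $x\in\mathbb{R}_+^k$, and NPT (no positive transfer) if $s(x)\ge0$ for all $x\in\mathbb{R}_+^k$. $\mathcal{M}_\Gamma$ is the set of IC, IR and NPT $\Gamma$-mechanisms. The buyer payoff function of the mechanism is the function $b:\mathbb{R}^k\to\mathbb{R}$, $b(x):=\sup_{z\in\mathbb{R}_+^k}[q(z)\cdot x-s(z)]$ (for IC mechanisms $b(x)=q(x)\cdot x-s(x)$ on $\mathbb{R}_+^k$); a mechanism is written $\mu=(q,s,b)$. For a convex $f:\mathbb{R}^k\to\mathbb{R}$, $f'(x;y):=\lim_{\delta\to0^+}(f(x+\delta y)-f(x))/\delta$.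 A mechanism $\mu=(q,s,b)\in\mathcal{M}_\Gamma$ is seller favorable if $s(x)=b'(x;x)-b(x)$ for every $x\in\mathbb{R}_+^k$. The revenue is $R(\mu;X):=\mathbb{E}[s(X)]$. *)

theory Defs
  imports "HOL-Probability.Probability"
begin

text \<open>Valuations live in the nonnegative orthant of R^k; we index coordinates by a
finite type 'n, so k = CARD('n) \<ge> 1.\<close>

definition nonneg_orthant :: "(real^'n) set" where
  "nonneg_orthant = {x. \<forall>i. 0 \<le> x $ i}"

definition is_IC :: "(real^'n \<Rightarrow> real^'n) \<Rightarrow> (real^'n \<Rightarrow> real) \<Rightarrow> bool" where
  "is_IC q s \<longleftrightarrow> (\<forall>x\<in>nonneg_orthant. \<forall>y\<in>nonneg_orthant.
      q x \<bullet> x - s x \<ge> q y \<bullet> x - s y)"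

definition is_IR :: "(real^'n \<Rightarrow> real^'n) \<Rightarrow> (real^'n \<Rightarrow> real) \<Rightarrow> bool" where
  "is_IR q s \<longleftrightarrow> (\<forall>x\<in>nonneg_orthant. q x \<bullet> x - s x \<ge> 0)"

definition is_NPT :: "(real^'n \<Rightarrow> real) \<Rightarrow> bool" where
  "is_NPT s \<longleftrightarrow> (\<forall>x\<in>nonneg_orthant. s x \<ge> 0)"

definition mechanism_in :: "(real^'n) set \<Rightarrow> (real^'n \<Rightarrow> real^'n) \<Rightarrow> (real^'n \<Rightarrow> real) \<Rightarrow> bool" where
  "mechanism_in \<Gamma> q s \<longleftrightarrow> (\<forall>x\<in>nonneg_orthant. q x \<in> \<Gamma>) \<and> is_IC q s \<and> is_IR q s \<and> is_NPT s"

definition buyer_payoff :: "(real^'n \<Rightarrow> real^'n) \<Rightarrow> (real^'n \<Rightarrow> real) \<Rightarrow> real^'n \<Rightarrow> real" where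
  "buyer_payoff q s x = (SUP z\<in>nonneg_orthant. q z \<bullet> x - s z)"

definition dir_deriv :: "(real^'n \<Rightarrow> real) \<Rightarrow> real^'n \<Rightarrow> real^'n \<Rightarrow> real" where
  "dir_deriv f x y = Lim (at_right (0::real)) (\<lambda>\<delta>. (f (x + \<delta> *\<^sub>R y) - f x) / \<delta>)"

definition seller_favorable :: "(real^'n) set \<Rightarrow> (real^'n \<Rightarrow> real^'n) \<Rightarrow> (real^'n \<Rightarrow> real) \<Rightarrow> bool" where
  "seller_favorable \<Gamma> q s \<longleftrightarrow> mechanism_in \<Gamma> q s \<and>
     (\<forall>x\<in>nonneg_orthant. s x = dir_deriv (buyer_payoff q s) x x - buyer_payoff q s x)"

definition revenue :: "'a measure \<Rightarrow> ('a \<Rightarrow> real^'n) \<Rightarrow> (real^'n \<Rightarrow> real) \<Rightarrow> real" where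
  "revenue M X s = (\<integral>\<omega>. s (X \<omega>) \<partial>M)"

end

theory Submission
  imports Defs
begin

text \<open>The buyer payoff \<open>b\<close> of a mechanism with bounded allocation set is a real-valued supremum
of affine functions, hence convex; its difference quotients along the ray through \<open>x\<close> therefore
decrease to \<open>b'(x;x)\<close>. Incentive compatibility gives \<open>s(x) \<le> (b(x + \<delta>x) - b(x))/\<delta> - b(x)\<close> for
every \<open>\<delta> > 0\<close>. Applying this to \<open>\<mu>\<^sub>n\<close>, letting \<open>n \<rightarrow> \<infinity>\<close> for fixed \<open>\<delta>\<close> and then \<open>\<delta> \<rightarrow> 0\<close>,
seller favorability of \<open>\<mu>\<close> turns the bound into \<open>limsup s\<^sub>n(x) \<le> s(x)\<close>. The payments are
dominated by \<open>C\<parallel>x\<parallel>\<close>, where \<open>C\<close> bounds \<open>\<Gamma>\<close>, so the reverse Fatou lemma yields the revenue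
inequality.\<close>

definition dir_diff_quot :: "('a::real_vector \<Rightarrow> real) \<Rightarrow> 'a \<Rightarrow> 'a \<Rightarrow> real \<Rightarrow> real" where
  "dir_diff_quot f x y \<delta> = (f (x + \<delta> *\<^sub>R y) - f x) / \<delta>"

lemma convex_on_ray:
  fixes f :: "'a::real_vector \<Rightarrow> real"
  assumes "convex_on UNIV f"
  shows "convex_on UNIV (\<lambda>t. f (x + t *\<^sub>R y))"
proof (rule convex_onI)
  fix u a b :: real assume "0 < u" "u < 1"
  have "x + ((1 - u) *\<^sub>R a + u *\<^sub>R b) *\<^sub>R y = (1 - u) *\<^sub>R (x + a *\<^sub>R y) + u *\<^sub>R (x + b *\<^sub>R y)"
    by (simp add: algebra_simps)
  then show "f (x + ((1 - u) *\<^sub>R a + u *\<^sub>R b) *\<^sub>R y) \<le> (1 - u) * f (x + a *\<^sub>R y) + u * f (x + b *\<^sub>R y)"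
    using convex_onD[OF assms, of u] \<open>0 < u\<close> \<open>u < 1\<close> by simp
qed simp

lemma dir_diff_quot_eq_slope: "dir_diff_quot f x y \<delta> = (f x - f (x + \<delta> *\<^sub>R y)) / (0 - \<delta>)"
  unfolding dir_diff_quot_def by (metis diff_0 minus_diff_eq minus_divide_divide)

lemma convex_on_dir_diff_quot_mono:
  fixes f :: "'a::real_vector \<Rightarrow> real"
  assumes "convex_on UNIV f" and "0 < \<delta>\<^sub>1" and "\<delta>\<^sub>1 \<le> \<delta>\<^sub>2"
  shows "dir_diff_quot f x y \<delta>\<^sub>1 \<le> dir_diff_quot f x y \<delta>\<^sub>2"
proof (cases "\<delta>\<^sub>1 = \<delta>\<^sub>2")
  case False
  then show ?thesis
    unfolding dir_diff_quot_eq_slope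
    using convex_on_slope_le(1)[OF convex_on_ray[OF assms(1)], of 0 \<delta>\<^sub>2 \<delta>\<^sub>1] assms(2,3)
    by simp
qed simp

lemma convex_on_dir_diff_quot_lower:
  fixes f :: "'a::real_vector \<Rightarrow> real"
  assumes "convex_on UNIV f" and "0 < \<delta>"
  shows "f x - f (x - y) \<le> dir_diff_quot f x y \<delta>"
proof -
  let ?g = "\<lambda>t. f (x + t *\<^sub>R y)"
  have "(?g (-1) - ?g 0) / (-1 - 0) \<le> (?g (-1) - ?g \<delta>) / (-1 - \<delta>)"
    "(?g (-1) - ?g \<delta>) / (-1 - \<delta>) \<le> (?g 0 - ?g \<delta>) / (0 - \<delta>)"
    using convex_on_slope_le[OF convex_on_ray[OF assms(1)], of "-1" \<delta> 0] assms(2) by simp_all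
  then show ?thesis
    unfolding dir_diff_quot_eq_slope by simp
qed

lemma convex_on_dir_diff_quot_tendsto:
  fixes f :: "real^'n \<Rightarrow> real"
  assumes "convex_on UNIV f"
  shows "(dir_diff_quot f x y \<longlongrightarrow> dir_deriv f x y) (at_right 0)"
proof -
  have "(dir_diff_quot f x y \<longlongrightarrow> Inf (dir_diff_quot f x y ` ({0<..} \<inter> {0<..})))
          (at 0 within ({0<..} \<inter> {0<..}))"
    by (rule Lim_right_bound[where K = "f x - f (x - y)"])
       (use assms convex_on_dir_diff_quot_mono convex_on_dir_diff_quot_lower in auto)
  then have lim: "(dir_diff_quot f x y \<longlongrightarrow> Inf (dir_diff_quot f x y ` {0<..})) (at_right 0)"
    by simp
  have "dir_deriv f x y = Lim (at_right 0) (dir_diff_quot f x y)"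
    by (simp add: dir_deriv_def dir_diff_quot_def[abs_def])
  with lim show ?thesis
    by (simp add: tendsto_Lim)
qed

lemma borel_measurable_dir_deriv_diag:
  fixes f :: "real^'n \<Rightarrow> real"
  assumes "convex_on UNIV f"
  shows "(\<lambda>x. dir_deriv f x x) \<in> borel_measurable borel"
proof (rule borel_measurable_LIMSEQ_real)
  have "filterlim (\<lambda>m. inverse (real (Suc m))) (at_right 0) sequentially"
    by (intro tendsto_imp_filterlim_at_right LIMSEQ_inverse_real_of_nat) auto
  then show "(\<lambda>m. dir_diff_quot f x x (inverse (real (Suc m)))) \<longlonglongrightarrow> dir_deriv f x x" for x
    using filterlim_compose[OF convex_on_dir_diff_quot_tendsto[OF assms]] by blast
  have "f \<in> borel_measurable borel"
    using convex_on_continuous[OF open_UNIV assms] by (rule borel_measurable_continuous_onI)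
  then show "(\<lambda>x. dir_diff_quot f x x (inverse (real (Suc m)))) \<in> borel_measurable borel" for m
    unfolding dir_diff_quot_def by measurable
qed

lemma limsup_ereal_le_iff_ennreal:
  fixes a :: "nat \<Rightarrow> real"
  assumes "\<And>n. 0 \<le> a n" and "0 \<le> c"
  shows "limsup (\<lambda>n. ereal (a n)) \<le> ereal c \<longleftrightarrow> limsup (\<lambda>n. ennreal (a n)) \<le> ennreal c"
proof -
  have "limsup (\<lambda>n. enn2ereal (ennreal (a n))) = enn2ereal (limsup (\<lambda>n. ennreal (a n)))"
    by (intro Limsup_compose_continuous_mono continuous_on_enn2ereal)
       (auto simp: mono_def less_eq_ennreal.rep_eq)
  then show ?thesis
    using assms by (simp add: less_eq_ennreal.rep_eq)
qed

lemma limsup_integral_le: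
  fixes f :: "nat \<Rightarrow> 'a \<Rightarrow> real"
  assumes f_meas: "\<And>n. f n \<in> borel_measurable M"
    and g: "integrable M g" and f_bounds: "\<And>n \<omega>. \<omega> \<in> space M \<Longrightarrow> 0 \<le> f n \<omega> \<and> f n \<omega> \<le> g \<omega>"
    and h_meas: "h \<in> borel_measurable M" and h_bounds: "\<And>\<omega>. \<omega> \<in> space M \<Longrightarrow> 0 \<le> h \<omega> \<and> h \<omega> \<le> g \<omega>"
    and limsup_f: "\<And>\<omega>. \<omega> \<in> space M \<Longrightarrow> limsup (\<lambda>n. ereal (f n \<omega>)) \<le> ereal (h \<omega>)"
  shows "limsup (\<lambda>n. ereal (\<integral>\<omega>. f n \<omega> \<partial>M)) \<le> ereal (\<integral>\<omega>. h \<omega> \<partial>M)"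
proof -
  have nn_integral_eq: "(\<integral>\<^sup>+\<omega>. ennreal (u \<omega>) \<partial>M) = ennreal (\<integral>\<omega>. u \<omega> \<partial>M)"
    if "integrable M u" "\<And>\<omega>. \<omega> \<in> space M \<Longrightarrow> 0 \<le> u \<omega>" for u
    using that by (intro nn_integral_eq_integral AE_I2) auto
  have g_nonneg: "\<omega> \<in> space M \<Longrightarrow> 0 \<le> g \<omega>" for \<omega>
    using f_bounds[of \<omega> 0] by linarith
  have f_int: "integrable M (f n)" for n
    using f_bounds g_nonneg
    by (intro Bochner_Integration.integrable_bound[OF g f_meas] AE_I2) auto
  have h_int: "integrable M h"
    using h_bounds g_nonneg
    by (intro Bochner_Integration.integrable_bound[OF g h_meas] AE_I2) auto
  have limsup_pointwise: "limsup (\<lambda>n. ennreal (f n \<omega>)) \<le> ennreal (h \<omega>)" if "\<omega> \<in> space M" for \<omega>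
    using limsup_ereal_le_iff_ennreal[of "\<lambda>n. f n \<omega>" "h \<omega>"] limsup_f[OF that]
      f_bounds[OF that] h_bounds[OF that] by simp
  have "limsup (\<lambda>n. \<integral>\<^sup>+\<omega>. ennreal (f n \<omega>) \<partial>M) \<le> (\<integral>\<^sup>+\<omega>. limsup (\<lambda>n. ennreal (f n \<omega>)) \<partial>M)"
  proof (rule nn_integral_limsup[where w = "\<lambda>\<omega>. ennreal (g \<omega>)"])
    show "(\<lambda>\<omega>. ennreal (f n \<omega>)) \<in> borel_measurable M" for n
      using f_meas by measurable
    show "(\<lambda>\<omega>. ennreal (g \<omega>)) \<in> borel_measurable M"
      using borel_measurable_integrable[OF g] by measurable
    show "AE \<omega> in M. ennreal (f n \<omega>) \<le> ennreal (g \<omega>)" for n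
      using f_bounds by (intro AE_I2 ennreal_leI) blast
    show "(\<integral>\<^sup>+\<omega>. ennreal (g \<omega>) \<partial>M) < \<infinity>"
      using nn_integral_eq[OF g g_nonneg] by simp
  qed
  also have "\<dots> \<le> (\<integral>\<^sup>+\<omega>. ennreal (h \<omega>) \<partial>M)"
    using limsup_pointwise by (rule nn_integral_mono)
  finally have "limsup (\<lambda>n. ennreal (\<integral>\<omega>. f n \<omega> \<partial>M)) \<le> ennreal (\<integral>\<omega>. h \<omega> \<partial>M)"
    using nn_integral_eq[OF f_int] nn_integral_eq[OF h_int] f_bounds h_bounds by (simp only:)
  moreover have "0 \<le> (\<integral>\<omega>. f n \<omega> \<partial>M)" for n
    using f_bounds by (intro integral_nonneg_AE AE_I2) blast
  moreover have "0 \<le> (\<integral>\<omega>. h \<omega> \<partial>M)"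
    using h_bounds by (intro integral_nonneg_AE AE_I2) blast
  ultimately show ?thesis
    by (simp add: limsup_ereal_le_iff_ennreal)
qed

lemma zero_in_nonneg_orthant: "0 \<in> nonneg_orthant"
  by (simp add: nonneg_orthant_def)

lemma allocation_inner_le:
  assumes "mechanism_in \<Gamma> q s" and "\<forall>g\<in>\<Gamma>. norm g \<le> C" and "z \<in> nonneg_orthant"
  shows "q z \<bullet> y \<le> C * norm y"
proof -
  have "norm (q z) \<le> C"
    using assms by (auto simp: mechanism_in_def)
  then show ?thesis
    using norm_cauchy_schwarz[of "q z" y] by (meson mult_right_mono norm_ge_zero order_trans)
qed

lemma payment_le_norm:
  assumes "mechanism_in \<Gamma> q s" and "\<forall>g\<in>\<Gamma>. norm g \<le> C" and "x \<in> nonneg_orthant"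
  shows "s x \<le> C * norm x"
  using allocation_inner_le[OF assms, of x] assms(1,3) by (auto simp: mechanism_in_def is_IR_def)

lemma payment_nonneg: "mechanism_in \<Gamma> q s \<Longrightarrow> x \<in> nonneg_orthant \<Longrightarrow> 0 \<le> s x"
  by (simp add: mechanism_in_def is_NPT_def)

lemma bdd_above_payoffs:
  fixes q :: "real^'n \<Rightarrow> real^'n"
  assumes "mechanism_in \<Gamma> q s" and "bounded \<Gamma>"
  shows "bdd_above ((\<lambda>z. q z \<bullet> y - s z) ` nonneg_orthant)"
proof -
  obtain C where C: "\<forall>g\<in>\<Gamma>. norm g \<le> C"
    using assms(2) bounded_iff by blast
  show ?thesis
  proof (rule bdd_aboveI2)
    fix z :: "real^'n" assume "z \<in> nonneg_orthant"
    then show "q z \<bullet> y - s z \<le> C * norm y"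
      using allocation_inner_le[OF assms(1) C, of z y] payment_nonneg[OF assms(1), of z] by linarith
  qed
qed

lemma buyer_payoff_ge:
  assumes "mechanism_in \<Gamma> q s" and "bounded \<Gamma>" and "z \<in> nonneg_orthant"
  shows "q z \<bullet> y - s z \<le> buyer_payoff q s y"
  unfolding buyer_payoff_def using bdd_above_payoffs[OF assms(1,2)] assms(3)
  by (rule cSUP_upper2) simp

lemma buyer_payoff_eq:
  assumes "mechanism_in \<Gamma> q s" and "bounded \<Gamma>" and "x \<in> nonneg_orthant"
  shows "buyer_payoff q s x = q x \<bullet> x - s x"
proof (rule antisym)
  show "buyer_payoff q s x \<le> q x \<bullet> x - s x"
    unfolding buyer_payoff_def using assms(1,3) zero_in_nonneg_orthant
    by (intro cSUP_least) (auto simp: mechanism_in_def is_IC_def)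
qed (rule buyer_payoff_ge[OF assms])

lemma convex_on_buyer_payoff:
  fixes q :: "real^'n \<Rightarrow> real^'n"
  assumes "mechanism_in \<Gamma> q s" and "bounded \<Gamma>"
  shows "convex_on UNIV (buyer_payoff q s)"
proof (rule convex_onI)
  fix t :: real and x y assume t: "0 < t" "t < 1"
  show "buyer_payoff q s ((1 - t) *\<^sub>R x + t *\<^sub>R y) \<le> (1 - t) * buyer_payoff q s x + t * buyer_payoff q s y"
    unfolding buyer_payoff_def[of q s "(1 - t) *\<^sub>R x + t *\<^sub>R y"]
  proof (rule cSUP_least)
    fix z :: "real^'n" assume z: "z \<in> nonneg_orthant"
    have "q z \<bullet> ((1 - t) *\<^sub>R x + t *\<^sub>R y) - s z = (1 - t) * (q z \<bullet> x - s z) + t * (q z \<bullet> y - s z)"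
      by (simp add: inner_add_right algebra_simps)
    also have "\<dots> \<le> (1 - t) * buyer_payoff q s x + t * buyer_payoff q s y"
      using t buyer_payoff_ge[OF assms z] by (intro add_mono mult_left_mono) auto
    finally show "q z \<bullet> ((1 - t) *\<^sub>R x + t *\<^sub>R y) - s z \<le> \<dots>" .
  qed (use zero_in_nonneg_orthant in blast)
qed simp

lemma payment_le_dir_diff_quot:
  assumes "mechanism_in \<Gamma> q s" and "bounded \<Gamma>" and "x \<in> nonneg_orthant" and "0 < \<delta>"
  shows "s x \<le> dir_diff_quot (buyer_payoff q s) x x \<delta> - buyer_payoff q s x"
proof -
  have "q x \<bullet> (x + \<delta> *\<^sub>R x) - s x \<le> buyer_payoff q s (x + \<delta> *\<^sub>R x)"
    by (rule buyer_payoff_ge[OF assms(1-3)])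
  then have "\<delta> * (q x \<bullet> x) \<le> buyer_payoff q s (x + \<delta> *\<^sub>R x) - buyer_payoff q s x"
    using buyer_payoff_eq[OF assms(1-3)] by (simp add: inner_add_right)
  then show ?thesis
    using assms(4) buyer_payoff_eq[OF assms(1-3)]
    by (simp add: dir_diff_quot_def pos_le_divide_eq mult.commute)
qed

lemma seller_favorable_payment_tendsto:
  assumes "seller_favorable \<Gamma> q s" and "bounded \<Gamma>" and "x \<in> nonneg_orthant"
  shows "((\<lambda>\<delta>. dir_diff_quot (buyer_payoff q s) x x \<delta> - buyer_payoff q s x) \<longlongrightarrow> s x) (at_right 0)"
proof -
  have "convex_on UNIV (buyer_payoff q s)"
    using assms(1,2) convex_on_buyer_payoff by (auto simp: seller_favorable_def)
  then show ?thesis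
    using assms(1,3) unfolding seller_favorable_def
    by (auto intro!: tendsto_eq_intros convex_on_dir_diff_quot_tendsto)
qed

lemma seller_favorable_borel_measurable_payment:
  assumes "seller_favorable \<Gamma> q s" and "bounded \<Gamma>"
    and "X \<in> borel_measurable M" and "\<forall>\<omega>\<in>space M. X \<omega> \<in> nonneg_orthant"
  shows "(\<lambda>\<omega>. s (X \<omega>)) \<in> borel_measurable M"
proof -
  let ?b = "buyer_payoff q s"
  have convex: "convex_on UNIV ?b"
    using assms(1,2) convex_on_buyer_payoff by (auto simp: seller_favorable_def)
  have "?b \<in> borel_measurable borel"
    using convex_on_continuous[OF open_UNIV convex] by (rule borel_measurable_continuous_onI)
  then have "(\<lambda>\<omega>. dir_deriv ?b (X \<omega>) (X \<omega>) - ?b (X \<omega>)) \<in> borel_measurable M"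
    using borel_measurable_dir_deriv_diag[OF convex]
    by (intro borel_measurable_diff measurable_compose[OF assms(3)])
  then show ?thesis
    by (rule measurable_cong[THEN iffD1, rotated])
       (use assms(1,4) in \<open>auto simp: seller_favorable_def\<close>)
qed

lemma limsup_payment_le:
  assumes "bounded \<Gamma>" and "\<And>n. mechanism_in \<Gamma> (qn n) (sn n)" and "seller_favorable \<Gamma> q s"
    and "\<And>y. (\<lambda>n. buyer_payoff (qn n) (sn n) y) \<longlonglongrightarrow> buyer_payoff q s y"
    and "x \<in> nonneg_orthant"
  shows "limsup (\<lambda>n. ereal (sn n x)) \<le> ereal (s x)"
proof -
  let ?B = "\<lambda>\<delta>. dir_diff_quot (buyer_payoff q s) x x \<delta> - buyer_payoff q s x"
  have bound: "limsup (\<lambda>n. ereal (sn n x)) \<le> ereal (?B \<delta>)" if "0 < \<delta>" for \<delta>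
  proof -
    let ?Bn = "\<lambda>n. dir_diff_quot (buyer_payoff (qn n) (sn n)) x x \<delta> - buyer_payoff (qn n) (sn n) x"
    have "?Bn \<longlonglongrightarrow> ?B \<delta>"
      unfolding dir_diff_quot_def by (intro tendsto_intros assms(4)) (use that in simp)
    then have "limsup (\<lambda>n. ereal (?Bn n)) = ereal (?B \<delta>)"
      by (intro lim_imp_Limsup tendsto_ereal) simp
    moreover have "limsup (\<lambda>n. ereal (sn n x)) \<le> limsup (\<lambda>n. ereal (?Bn n))"
      using payment_le_dir_diff_quot[OF assms(2,1,5) that] by (intro Limsup_mono) auto
    ultimately show ?thesis
      by simp
  qed
  have "((\<lambda>\<delta>. ereal (?B \<delta>)) \<longlongrightarrow> ereal (s x)) (at_right 0)"
    using seller_favorable_payment_tendsto[OF assms(3,1,5)] by (rule tendsto_ereal)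
  moreover have "\<forall>\<^sub>F \<delta> in at_right 0. limsup (\<lambda>n. ereal (sn n x)) \<le> ereal (?B \<delta>)"
    using eventually_at_right_less by (rule eventually_mono) (rule bound)
  ultimately show ?thesis
    by (rule tendsto_le[OF trivial_limit_at_right_real _ tendsto_const])
qed

theorem proposition4:
  fixes \<Gamma> :: "(real^'n) set"
    and qn :: "nat \<Rightarrow> real^'n \<Rightarrow> real^'n" and sn :: "nat \<Rightarrow> real^'n \<Rightarrow> real"
    and q :: "real^'n \<Rightarrow> real^'n" and s :: "real^'n \<Rightarrow> real"
  assumes "\<Gamma> \<noteq> {}" and "compact \<Gamma>" and "\<Gamma> \<subseteq> nonneg_orthant"
    and "\<And>n. mechanism_in \<Gamma> (qn n) (sn n)"
    and "mechanism_in \<Gamma> q s"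
    and "\<And>x. (\<lambda>n. buyer_payoff (qn n) (sn n) x) \<longlonglongrightarrow> buyer_payoff q s x"
    and "seller_favorable \<Gamma> q s"
  shows "(\<forall>x\<in>nonneg_orthant. limsup (\<lambda>n. ereal (sn n x)) \<le> ereal (s x))
    \<and> (\<forall>(M::'a measure) X. prob_space M \<longrightarrow> X \<in> borel_measurable M
         \<longrightarrow> (\<forall>\<omega>\<in>space M. X \<omega> \<in> nonneg_orthant)
         \<longrightarrow> integrable M (\<lambda>\<omega>. norm (X \<omega>))
         \<longrightarrow> (\<forall>n. (\<lambda>\<omega>. sn n (X \<omega>)) \<in> borel_measurable M)
         \<longrightarrow> limsup (\<lambda>n. ereal (revenue M X (sn n))) \<le> ereal (revenue M X s))"
proof (intro conjI allI ballI impI)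
  have bounded: "bounded \<Gamma>"
    using assms(2) by (rule compact_imp_bounded)
  then obtain C where C: "\<forall>g\<in>\<Gamma>. norm g \<le> C"
    using bounded_iff by blast
  note limsup_pointwise = limsup_payment_le[OF bounded assms(4,7,6)]
  show "limsup (\<lambda>n. ereal (sn n x)) \<le> ereal (s x)" if "x \<in> nonneg_orthant" for x
    using limsup_pointwise[OF that] .
  fix M :: "'a measure" and X
  assume X: "X \<in> borel_measurable M" "\<forall>\<omega>\<in>space M. X \<omega> \<in> nonneg_orthant"
    and X_int: "integrable M (\<lambda>\<omega>. norm (X \<omega>))"
    and sn_meas: "\<forall>n. (\<lambda>\<omega>. sn n (X \<omega>)) \<in> borel_measurable M"
  show "limsup (\<lambda>n. ereal (revenue M X (sn n))) \<le> ereal (revenue M X s)"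
    unfolding revenue_def
  proof (rule limsup_integral_le[where g = "\<lambda>\<omega>. C * norm (X \<omega>)"])
    show "integrable M (\<lambda>\<omega>. C * norm (X \<omega>))"
      using X_int by simp
    show "(\<lambda>\<omega>. s (X \<omega>)) \<in> borel_measurable M"
      using seller_favorable_borel_measurable_payment[OF assms(7) bounded X] .
    fix \<omega> assume "\<omega> \<in> space M"
    then have "X \<omega> \<in> nonneg_orthant"
      using X(2) by blast
    then show "0 \<le> sn n (X \<omega>) \<and> sn n (X \<omega>) \<le> C * norm (X \<omega>)"
      and "0 \<le> s (X \<omega>) \<and> s (X \<omega>) \<le> C * norm (X \<omega>)"
      and "limsup (\<lambda>n. ereal (sn n (X \<omega>))) \<le> ereal (s (X \<omega>))" for n
      using payment_nonneg payment_le_norm assms(4,5) C limsup_pointwise by blast+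
  qed (use sn_meas in blast)
qed

end
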